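(* Let $\mathbf{L}=(L,\le)$ be a finite lattice with more than two elements and let $(R,\vee,\circ)$ be a subsemiring of $(\mathrm{Res}_1(\mathbf{L}),\vee,\circ)$ such that $f_{a,0}\in R$ for all $a\in L\setminus\{1\}$, every $f\in R$ satisfies $f_{a,0}\le f$ for some $a\in L\setminus\{1\}$, and for all $a\in L\setminus\{0,1\}$, $b\in L$ there exists $f\in R$ with $f(a)=b$. Then $(R,\vee)$ has a neutral element if and only if $1$ is join-irreducible in $\mathbf{L}$. If this neutral element exists, it is right but not left absorbing in $(R,\vee,\circ)$.
   Context: $\mathrm{Res}_1(\mathbf{L})$ is the set of maps $f:L\to L$ preserving binary joins with $f(0)=0$ and $f(1)=1$, a semiring under pointwise join and composition, ordered pointwise. $f_{a,b}(x)=b$ if $x\le a$ and $1$ otherwise. $1$ is join-irreducible if $1\ne a\vee b$ for all $a,b\in L\setminus\{1\}$. An element $r$ is right absorbing if $s\circ r=r$ for all $s\in R$, left absorbing if $r\circ s=r$ for all $s\in R$. *)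

theory Defs
  imports Main
begin

definition Res1 :: "('a::bounded_lattice \<Rightarrow> 'a) set" where
  "Res1 = {f. (\<forall>x y. f (sup x y) = sup (f x) (f y)) \<and> f bot = bot \<and> f top = top}"

definition subsemiring_Res1 :: "('a::bounded_lattice \<Rightarrow> 'a) set \<Rightarrow> bool" where
  "subsemiring_Res1 R \<longleftrightarrow> R \<subseteq> Res1 \<and> R \<noteq> {} \<and>
     (\<forall>f\<in>R. \<forall>g\<in>R. (\<lambda>x. sup (f x) (g x)) \<in> R) \<and>
     (\<forall>f\<in>R. \<forall>g\<in>R. f \<circ> g \<in> R)"

definition fab :: "'a::bounded_lattice \<Rightarrow> 'a \<Rightarrow> 'a \<Rightarrow> 'a" where
  "fab a b = (\<lambda>x. if x \<le> a then b else top)"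

definition top_join_irreducible :: "'a::bounded_lattice itself \<Rightarrow> bool" where
  "top_join_irreducible _ \<longleftrightarrow> (\<forall>a b::'a. a \<noteq> top \<longrightarrow> b \<noteq> top \<longrightarrow> sup a b \<noteq> top)"

definition join_neutral :: "('a::bounded_lattice \<Rightarrow> 'a) set \<Rightarrow> ('a \<Rightarrow> 'a) \<Rightarrow> bool" where
  "join_neutral R e \<longleftrightarrow> e \<in> R \<and> (\<forall>f\<in>R. (\<lambda>x. sup (e x) (f x)) = f)"

definition right_absorbing :: "('a \<Rightarrow> 'a) set \<Rightarrow> ('a \<Rightarrow> 'a) \<Rightarrow> bool" where
  "right_absorbing R r \<longleftrightarrow> (\<forall>s\<in>R. s \<circ> r = r)"

definition left_absorbing :: "('a \<Rightarrow> 'a) set \<Rightarrow> ('a \<Rightarrow> 'a) \<Rightarrow> bool" where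
  "left_absorbing R r \<longleftrightarrow> (\<forall>s\<in>R. r \<circ> s = r)"

end

theory Submission
  imports Defs
begin

text \<open>A join-neutral element lies below every f_{a,0}, so it must be the map sending top to
  top and everything else to bot. This map preserves binary joins exactly when top is
  join-irreducible, and in a finite lattice it is then f_{m,0} for the unique coatom m.
  Since every map in Res_1 fixes bot and top, it is right absorbing; it is not left
  absorbing because some element of R sends a non-top element to top.\<close>

definition top_indicator :: "'a::bounded_lattice \<Rightarrow> 'a" where
  "top_indicator x = (if x = top then top else bot)"

lemma Res1_bot: "f \<in> Res1 \<Longrightarrow> f bot = bot"
  and Res1_top: "f \<in> Res1 \<Longrightarrow> f top = top"
  and Res1_sup: "f \<in> Res1 \<Longrightarrow> f (sup x y) = sup (f x) (f y)"
  unfolding Res1_def by auto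

lemma subsemiring_Res1_subset: "subsemiring_Res1 R \<Longrightarrow> R \<subseteq> Res1"
  unfolding subsemiring_Res1_def by blast

lemma card_gt_2_ex_proper:
  assumes "card (UNIV :: 'a::{finite, bounded_lattice} set) > 2"
  shows "\<exists>a::'a. a \<noteq> bot \<and> a \<noteq> top"
proof (rule ccontr)
  assume "\<not> ?thesis"
  then have "card (UNIV::'a set) \<le> card {bot, top::'a}" by (intro card_mono) auto
  also have "\<dots> \<le> 2" by (simp add: card_insert_le_m1)
  finally show False using assms by simp
qed

lemma top_indicator_mem_Res1_iff:
  "top_indicator \<in> (Res1 :: ('a::bounded_lattice \<Rightarrow> 'a) set) \<longleftrightarrow> top_join_irreducible TYPE('a)"
proof
  assume ind: "top_indicator \<in> (Res1 :: ('a \<Rightarrow> 'a) set)"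
  show "top_join_irreducible TYPE('a)"
    unfolding top_join_irreducible_def
  proof (intro allI impI notI)
    fix a b :: 'a
    assume "a \<noteq> top" "b \<noteq> top" "sup a b = top"
    then have "top_indicator (sup a b) \<noteq> sup (top_indicator a) (top_indicator b)"
      by (auto simp: top_indicator_def bot_unique)
    then show False using Res1_sup[OF ind] by blast
  qed
next
  assume "top_join_irreducible TYPE('a)"
  then have "top_indicator (sup x y) = sup (top_indicator x) (top_indicator y)" for x y :: 'a
    unfolding top_join_irreducible_def top_indicator_def by auto
  moreover have "top_indicator bot = (bot::'a)" "top_indicator top = (top::'a)"
    unfolding top_indicator_def by (auto simp: bot_unique)
  ultimately show "top_indicator \<in> (Res1 :: ('a \<Rightarrow> 'a) set)" unfolding Res1_def by simp
qed

lemma join_neutral_eq_top_indicator: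
  assumes "R \<subseteq> Res1" "\<forall>a. a \<noteq> top \<longrightarrow> fab a bot \<in> R" "join_neutral R e"
  shows "e = top_indicator"
proof
  fix x
  show "e x = top_indicator x"
  proof (cases "x = top")
    case True
    have "e \<in> Res1" using assms(1,3) unfolding join_neutral_def by blast
    then show ?thesis using True by (simp add: Res1_top top_indicator_def)
  next
    case False
    then have "fab x bot \<in> R" using assms(2) by blast
    then have "(\<lambda>y. sup (e y) (fab x bot y)) = fab x bot"
      using assms(3) unfolding join_neutral_def by blast
    then have "sup (e x) (fab x bot x) = fab x bot x" by metis
    then show ?thesis using False by (simp add: fab_def top_indicator_def)
  qed
qed

lemma top_indicator_join_neutral:
  assumes "R \<subseteq> Res1" "top_indicator \<in> R"
  shows "join_neutral R top_indicator"
  using assms Res1_top unfolding join_neutral_def top_indicator_def by fastforce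

lemma top_join_irreducible_ex_coatom:
  assumes "top_join_irreducible TYPE('a::{finite, bounded_lattice})" "(bot::'a) \<noteq> top"
  shows "\<exists>m::'a. \<forall>x. x \<le> m \<longleftrightarrow> x \<noteq> top"
proof -
  obtain m :: 'a where m: "m \<noteq> top" and maximal: "\<And>b. b \<noteq> top \<Longrightarrow> m \<le> b \<Longrightarrow> m = b"
    using finite_has_maximal[of "{x::'a. x \<noteq> top}"] assms(2) by auto
  have "x \<le> m" if "x \<noteq> top" for x
  proof -
    have "sup x m \<noteq> top" using assms(1) that m unfolding top_join_irreducible_def by blast
    then show ?thesis using maximal[of "sup x m"] by (metis sup.cobounded1 sup.cobounded2)
  qed
  then show ?thesis using m top_le by blast
qed

lemma fab_bot_eq_top_indicator:
  assumes "\<forall>x. x \<le> m \<longleftrightarrow> x \<noteq> top"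
  shows "fab m bot = top_indicator"
proof
  fix x
  have "x \<le> m \<longleftrightarrow> x \<noteq> top" using assms ..
  then show "fab m bot x = top_indicator x" unfolding fab_def top_indicator_def by simp
qed

lemma top_indicator_right_absorbing: "R \<subseteq> Res1 \<Longrightarrow> right_absorbing R top_indicator"
  unfolding right_absorbing_def top_indicator_def using Res1_bot Res1_top by fastforce

lemma top_indicator_not_left_absorbing:
  assumes "s \<in> R" "s a = top" "a \<noteq> top"
  shows "\<not> left_absorbing R top_indicator"
proof
  assume "left_absorbing R top_indicator"
  then have "top_indicator (s a) = top_indicator a"
    using assms(1) unfolding left_absorbing_def by (metis comp_apply)
  then have "(bot::'a) = top" using assms(2,3) by (simp add: top_indicator_def)
  then have "a \<le> bot" by simp
  then have "a = bot" by (rule le_bot)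
  with assms(3) \<open>bot = top\<close> show False by simp
qed

lemma top_indicator_mem_iff:
  fixes R :: "('a::{finite, bounded_lattice} \<Rightarrow> 'a) set"
  assumes "R \<subseteq> Res1" "\<forall>a. a \<noteq> top \<longrightarrow> fab a bot \<in> R" "(bot::'a) \<noteq> top"
  shows "top_indicator \<in> R \<longleftrightarrow> top_join_irreducible TYPE('a)"
proof
  assume "top_indicator \<in> R"
  then have "top_indicator \<in> (Res1 :: ('a \<Rightarrow> 'a) set)" using assms(1) by (rule subsetD[rotated])
  then show "top_join_irreducible TYPE('a)" by (simp only: top_indicator_mem_Res1_iff)
next
  assume "top_join_irreducible TYPE('a)"
  then obtain m :: 'a where m: "\<forall>x. x \<le> m \<longleftrightarrow> x \<noteq> top"
    using assms(3) top_join_irreducible_ex_coatom by blast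
  then have "m \<le> m \<longleftrightarrow> m \<noteq> top" ..
  then have "fab m bot \<in> R" using assms(2) by simp
  moreover have "fab m bot = top_indicator" using m by (rule fab_bot_eq_top_indicator)
  ultimately show "top_indicator \<in> R" by simp
qed

lemma join_neutral_iff:
  fixes R :: "('a::{finite, bounded_lattice} \<Rightarrow> 'a) set"
  assumes "R \<subseteq> Res1" "\<forall>a. a \<noteq> top \<longrightarrow> fab a bot \<in> R" "(bot::'a) \<noteq> top"
  shows "join_neutral R e \<longleftrightarrow> e = top_indicator \<and> top_join_irreducible TYPE('a)"
proof
  assume e: "join_neutral R e"
  then have "e = top_indicator" by (rule join_neutral_eq_top_indicator[OF assms(1,2)])
  moreover have "e \<in> R" using e unfolding join_neutral_def by blast
  ultimately show "e = top_indicator \<and> top_join_irreducible TYPE('a)"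
    using top_indicator_mem_iff[OF assms] by blast
next
  assume "e = top_indicator \<and> top_join_irreducible TYPE('a)"
  then show "join_neutral R e"
    using top_indicator_mem_iff[OF assms] top_indicator_join_neutral[OF assms(1)] by blast
qed

theorem proposition7p1:
  fixes R :: "('a::{finite, bounded_lattice} \<Rightarrow> 'a) set"
  assumes "card (UNIV :: 'a set) > 2"
    and "subsemiring_Res1 R"
    and "\<forall>a. a \<noteq> top \<longrightarrow> fab a bot \<in> R"
    and "\<forall>f\<in>R. \<exists>a. a \<noteq> top \<and> fab a bot \<le> f"
    and "\<forall>a b. a \<noteq> bot \<and> a \<noteq> top \<longrightarrow> (\<exists>f\<in>R. f a = b)"
  shows "((\<exists>e. join_neutral R e) \<longleftrightarrow> top_join_irreducible TYPE('a)) \<and>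
         (\<forall>e. join_neutral R e \<longrightarrow> right_absorbing R e \<and> \<not> left_absorbing R e)"
proof -
  have R: "R \<subseteq> Res1" using assms(2) by (rule subsemiring_Res1_subset)
  obtain a0 :: 'a where a0: "a0 \<noteq> bot" "a0 \<noteq> top" using card_gt_2_ex_proper[OF assms(1)] by blast
  have bot_ne_top: "(bot::'a) \<noteq> top"
  proof
    assume "(bot::'a) = top"
    then have "a0 \<le> bot" by simp
    then have "a0 = bot" by (rule le_bot)
    with a0(1) show False ..
  qed
  note neutral_iff = join_neutral_iff[OF R assms(3) bot_ne_top]
  obtain s where "s \<in> R" "s a0 = top" using assms(5) a0 by blast
  then have "\<not> left_absorbing R top_indicator"
    using a0(2) by (rule top_indicator_not_left_absorbing)
  then show ?thesis
    using neutral_iff top_indicator_right_absorbing[OF R] by simp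
qed

end
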